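(* Let $f:T\to T'$ be a homomorphism of pre-trusses. If $P$ is a completely prime paragon in the pre-truss $\operatorname{im}f$, then $f^{-1}(P)$ is a completely prime paragon in $T$.
   Context: A heap is a set with a ternary operation $[-,-,-]$ satisfying $[a_1,a_2,[a_3,a_4,a_5]]=[[a_1,a_2,a_3],a_4,a_5]$ and $[a,a,b]=b=[b,a,a]$. A pre-truss is a heap with an associative multiplication; homomorphisms preserve both operations, and images are pre-trusses. A normal sub-heap is a non-empty subset $S$ closed under $[-,-,-]$ with $[[a,e,s],a,e]\in S$ for all $a$ and $e,s\in S$; $a\sim_S b$ iff $[a,b,s]\in S$ for some (equivalently all) $s\in S$. A sub-heap $S$ is closed if $[ts',ts,s]\in S$ and $[s't,st,s]\in S$ for all $s,s'\in S$, $t$. A paragon is a non-empty normal sub-heap $P$ all of whose $\sim_P$-classes are closed. An ideal is a normal sub-heap $I$ with $ti,it\in I$ for all $t$, $i\in I$. For $p\in P$, $a$ in the pre-truss, $P_p^a=\{[q,p,a]\mid q\in P\}$. A non-empty paragon $P$ of a pre-truss $X$ is completely prime if for all $p\in P$ and $a,b,c\in X$: $[ab,ac,p]\in P$ implies that $P_p^a$ is an ideal or $[b,c,p]\in P$; and $[ba,ca,p]\in P$ implies that $P_p^a$ is an ideal or $[b,c,p]\in P$. *)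

theory Defs
  imports Main
begin

text \<open>A structure is given by a carrier
set A, a ternary heap operation h and a binary multiplication m (total
functions on the ambient type, only their behaviour on A matters).\<close>

definition heap :: "'a set \<Rightarrow> ('a \<Rightarrow> 'a \<Rightarrow> 'a \<Rightarrow> 'a) \<Rightarrow> bool" where
  "heap A h \<longleftrightarrow>
     (\<forall>a\<in>A. \<forall>b\<in>A. \<forall>c\<in>A. h a b c \<in> A) \<and>
     (\<forall>a1\<in>A. \<forall>a2\<in>A. \<forall>a3\<in>A. \<forall>a4\<in>A. \<forall>a5\<in>A.
        h a1 a2 (h a3 a4 a5) = h (h a1 a2 a3) a4 a5) \<and>
     (\<forall>a\<in>A. \<forall>b\<in>A. h a a b = b \<and> h b a a = b)"

definition pretruss :: "'a set \<Rightarrow> ('a \<Rightarrow> 'a \<Rightarrow> 'a \<Rightarrow> 'a) \<Rightarrow> ('a \<Rightarrow> 'a \<Rightarrow> 'a) \<Rightarrow> bool" where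
  "pretruss A h m \<longleftrightarrow> heap A h \<and>
     (\<forall>a\<in>A. \<forall>b\<in>A. m a b \<in> A) \<and>
     (\<forall>a\<in>A. \<forall>b\<in>A. \<forall>c\<in>A. m (m a b) c = m a (m b c))"

definition pretruss_hom ::
  "'a set \<Rightarrow> ('a \<Rightarrow> 'a \<Rightarrow> 'a \<Rightarrow> 'a) \<Rightarrow> ('a \<Rightarrow> 'a \<Rightarrow> 'a) \<Rightarrow>
   'b set \<Rightarrow> ('b \<Rightarrow> 'b \<Rightarrow> 'b \<Rightarrow> 'b) \<Rightarrow> ('b \<Rightarrow> 'b \<Rightarrow> 'b) \<Rightarrow> ('a \<Rightarrow> 'b) \<Rightarrow> bool" where
  "pretruss_hom A h m B h' m' f \<longleftrightarrow>
     (\<forall>a\<in>A. f a \<in> B) \<and>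
     (\<forall>a\<in>A. \<forall>b\<in>A. \<forall>c\<in>A. f (h a b c) = h' (f a) (f b) (f c)) \<and>
     (\<forall>a\<in>A. \<forall>b\<in>A. f (m a b) = m' (f a) (f b))"

definition subheap :: "'a set \<Rightarrow> ('a \<Rightarrow> 'a \<Rightarrow> 'a \<Rightarrow> 'a) \<Rightarrow> 'a set \<Rightarrow> bool" where
  "subheap A h S \<longleftrightarrow> S \<subseteq> A \<and> (\<forall>a\<in>S. \<forall>b\<in>S. \<forall>c\<in>S. h a b c \<in> S)"

definition normal_subheap :: "'a set \<Rightarrow> ('a \<Rightarrow> 'a \<Rightarrow> 'a \<Rightarrow> 'a) \<Rightarrow> 'a set \<Rightarrow> bool" where
  "normal_subheap A h S \<longleftrightarrow> subheap A h S \<and> S \<noteq> {} \<and>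
     (\<forall>a\<in>A. \<forall>e\<in>S. \<forall>s\<in>S. h (h a e s) a e \<in> S)"

definition heap_rel :: "'a set \<Rightarrow> ('a \<Rightarrow> 'a \<Rightarrow> 'a \<Rightarrow> 'a) \<Rightarrow> 'a set \<Rightarrow> 'a \<Rightarrow> 'a \<Rightarrow> bool" where
  "heap_rel A h S a b \<longleftrightarrow> a \<in> A \<and> b \<in> A \<and> (\<exists>s\<in>S. h a b s \<in> S)"

definition heap_class :: "'a set \<Rightarrow> ('a \<Rightarrow> 'a \<Rightarrow> 'a \<Rightarrow> 'a) \<Rightarrow> 'a set \<Rightarrow> 'a \<Rightarrow> 'a set" where
  "heap_class A h S a = {b. heap_rel A h S a b}"

definition closed_subheap ::
  "'a set \<Rightarrow> ('a \<Rightarrow> 'a \<Rightarrow> 'a \<Rightarrow> 'a) \<Rightarrow> ('a \<Rightarrow> 'a \<Rightarrow> 'a) \<Rightarrow> 'a set \<Rightarrow> bool" where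
  "closed_subheap A h m S \<longleftrightarrow> subheap A h S \<and>
     (\<forall>s\<in>S. \<forall>s'\<in>S. \<forall>t\<in>A. h (m t s') (m t s) s \<in> S \<and> h (m s' t) (m s t) s \<in> S)"

definition paragon ::
  "'a set \<Rightarrow> ('a \<Rightarrow> 'a \<Rightarrow> 'a \<Rightarrow> 'a) \<Rightarrow> ('a \<Rightarrow> 'a \<Rightarrow> 'a) \<Rightarrow> 'a set \<Rightarrow> bool" where
  "paragon A h m P \<longleftrightarrow> normal_subheap A h P \<and>
     (\<forall>a\<in>A. closed_subheap A h m (heap_class A h P a))"

definition ideal ::
  "'a set \<Rightarrow> ('a \<Rightarrow> 'a \<Rightarrow> 'a \<Rightarrow> 'a) \<Rightarrow> ('a \<Rightarrow> 'a \<Rightarrow> 'a) \<Rightarrow> 'a set \<Rightarrow> bool" where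
  "ideal A h m I \<longleftrightarrow> normal_subheap A h I \<and>
     (\<forall>t\<in>A. \<forall>i\<in>I. m t i \<in> I \<and> m i t \<in> I)"

text \<open>\<open>P_p^a = {[q,p,a] | q \<in> P}\<close>.\<close>
definition shifted :: "('a \<Rightarrow> 'a \<Rightarrow> 'a \<Rightarrow> 'a) \<Rightarrow> 'a set \<Rightarrow> 'a \<Rightarrow> 'a \<Rightarrow> 'a set" where
  "shifted h P p a = {h q p a | q. q \<in> P}"

definition completely_prime ::
  "'a set \<Rightarrow> ('a \<Rightarrow> 'a \<Rightarrow> 'a \<Rightarrow> 'a) \<Rightarrow> ('a \<Rightarrow> 'a \<Rightarrow> 'a) \<Rightarrow> 'a set \<Rightarrow> bool" where
  "completely_prime A h m P \<longleftrightarrow> P \<noteq> {} \<and> paragon A h m P \<and>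
     (\<forall>p\<in>P. \<forall>a\<in>A. \<forall>b\<in>A. \<forall>c\<in>A.
        (h (m a b) (m a c) p \<in> P \<longrightarrow> ideal A h m (shifted h P p a) \<or> h b c p \<in> P) \<and>
        (h (m b a) (m c a) p \<in> P \<longrightarrow> ideal A h m (shifted h P p a) \<or> h b c p \<in> P))"

end

theory Submission
  imports Defs
begin

text \<open>Every notion involved is defined by closure conditions on elements, and a
homomorphism transports the heap operation and the multiplication, so each
condition on \<open>f\<^sup>-\<^sup>1(P)\<close> is the image under \<open>f\<close> of the same condition on \<open>P\<close>.
The only places where one has to come back from \<open>im f\<close> to \<open>T\<close> are the
\<open>\<sim>\<^sub>P\<close>-classes and the sets \<open>P\<^sub>p\<^sup>a\<close>; there every element of \<open>P\<close> has a preimage,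
and the heap laws of \<open>T\<close> let one solve \<open>[q,p,a] = x\<close> for \<open>q = [x,a,p]\<close>.\<close>

lemma heap_closed: "heap A h \<Longrightarrow> a \<in> A \<Longrightarrow> b \<in> A \<Longrightarrow> c \<in> A \<Longrightarrow> h a b c \<in> A"
  unfolding heap_def by blast

lemma heap_assoc:
  "heap A h \<Longrightarrow> a1 \<in> A \<Longrightarrow> a2 \<in> A \<Longrightarrow> a3 \<in> A \<Longrightarrow> a4 \<in> A \<Longrightarrow> a5 \<in> A \<Longrightarrow>
    h (h a1 a2 a3) a4 a5 = h a1 a2 (h a3 a4 a5)"
  unfolding heap_def by metis

lemma heap_cancel_left: "heap A h \<Longrightarrow> a \<in> A \<Longrightarrow> b \<in> A \<Longrightarrow> h a a b = b"
  unfolding heap_def by blast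

lemma heap_cancel_right: "heap A h \<Longrightarrow> a \<in> A \<Longrightarrow> b \<in> A \<Longrightarrow> h b a a = b"
  unfolding heap_def by blast

lemma pretruss_heap: "pretruss A h m \<Longrightarrow> heap A h"
  unfolding pretruss_def by blast

lemma pretruss_mult_closed: "pretruss A h m \<Longrightarrow> a \<in> A \<Longrightarrow> b \<in> A \<Longrightarrow> m a b \<in> A"
  unfolding pretruss_def by blast

lemma pretruss_hom_heap_op:
  "pretruss_hom T h m T' h' m' f \<Longrightarrow> a \<in> T \<Longrightarrow> b \<in> T \<Longrightarrow> c \<in> T \<Longrightarrow>
    f (h a b c) = h' (f a) (f b) (f c)"
  unfolding pretruss_hom_def by blast

lemma pretruss_hom_mult:
  "pretruss_hom T h m T' h' m' f \<Longrightarrow> a \<in> T \<Longrightarrow> b \<in> T \<Longrightarrow> f (m a b) = m' (f a) (f b)"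
  unfolding pretruss_hom_def by blast

lemma normal_subheap_image_preimage:
  assumes "pretruss_hom T h m T' h' m' f" and "heap T h"
    and "normal_subheap (f ` T) h' S"
  shows "normal_subheap T h {x \<in> T. f x \<in> S}"
proof -
  have "{x \<in> T. f x \<in> S} \<noteq> {}"
    using assms(3) unfolding normal_subheap_def subheap_def by blast
  then show ?thesis
    using assms heap_closed[OF assms(2)] pretruss_hom_heap_op[OF assms(1)]
    unfolding normal_subheap_def subheap_def by (auto simp del: ex_in_conv)
qed

lemma ideal_image_preimage:
  assumes hom: "pretruss_hom T h m T' h' m' f" and T: "pretruss T h m"
    and "ideal (f ` T) h' m' I"
  shows "ideal T h m {x \<in> T. f x \<in> I}"
  using assms normal_subheap_image_preimage[OF hom pretruss_heap[OF T]]
    pretruss_mult_closed[OF T] pretruss_hom_mult[OF hom]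
  unfolding ideal_def by auto

lemma closed_subheap_image_preimage:
  assumes hom: "pretruss_hom T h m T' h' m' f" and T: "pretruss T h m"
    and "closed_subheap (f ` T) h' m' S"
  shows "closed_subheap T h m {x \<in> T. f x \<in> S}"
  using assms heap_closed[OF pretruss_heap[OF T]] pretruss_mult_closed[OF T]
    pretruss_hom_heap_op[OF hom] pretruss_hom_mult[OF hom]
  unfolding closed_subheap_def subheap_def by auto

lemma heap_class_image_preimage:
  assumes hom: "pretruss_hom T h m T' h' m' f" and T: "heap T h"
    and P: "P \<subseteq> f ` T" and a: "a \<in> T"
  shows "heap_class T h {x \<in> T. f x \<in> P} a = {x \<in> T. f x \<in> heap_class (f ` T) h' P (f a)}"
proof (intro set_eqI iffI)
  fix b assume "b \<in> heap_class T h {x \<in> T. f x \<in> P} a"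
  then show "b \<in> {x \<in> T. f x \<in> heap_class (f ` T) h' P (f a)}"
    using a heap_closed[OF T] pretruss_hom_heap_op[OF hom]
    unfolding heap_class_def heap_rel_def by auto
next
  fix b assume b: "b \<in> {x \<in> T. f x \<in> heap_class (f ` T) h' P (f a)}"
  then obtain s where s: "s \<in> T" "f s \<in> P" "h' (f a) (f b) (f s) \<in> P"
    using P unfolding heap_class_def heap_rel_def by blast
  then have "h a b s \<in> {x \<in> T. f x \<in> P}"
    using a b heap_closed[OF T] pretruss_hom_heap_op[OF hom] by auto
  then show "b \<in> heap_class T h {x \<in> T. f x \<in> P} a"
    using a b s unfolding heap_class_def heap_rel_def by auto
qed

lemma paragon_image_preimage:
  assumes hom: "pretruss_hom T h m T' h' m' f" and T: "pretruss T h m"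
    and P: "paragon (f ` T) h' m' P"
  shows "paragon T h m {x \<in> T. f x \<in> P}"
proof -
  have "P \<subseteq> f ` T"
    using P unfolding paragon_def normal_subheap_def subheap_def by blast
  then have "closed_subheap T h m (heap_class T h {x \<in> T. f x \<in> P} a)" if "a \<in> T" for a
    using P that closed_subheap_image_preimage[OF hom T]
      heap_class_image_preimage[OF hom pretruss_heap[OF T]]
    unfolding paragon_def by auto
  then show ?thesis
    using P normal_subheap_image_preimage[OF hom pretruss_heap[OF T]]
    unfolding paragon_def by blast
qed

lemma shifted_image_preimage:
  assumes hom: "pretruss_hom T h m T' h' m' f" and T: "heap T h"
    and P: "P \<subseteq> f ` T" and p: "p \<in> T" and a: "a \<in> T"
  shows "shifted h {x \<in> T. f x \<in> P} p a = {x \<in> T. f x \<in> shifted h' P (f p) (f a)}"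
proof (intro set_eqI iffI)
  fix x assume "x \<in> shifted h {x \<in> T. f x \<in> P} p a"
  then show "x \<in> {x \<in> T. f x \<in> shifted h' P (f p) (f a)}"
    using p a heap_closed[OF T] pretruss_hom_heap_op[OF hom]
    unfolding shifted_def by auto
next
  fix x assume x: "x \<in> {x \<in> T. f x \<in> shifted h' P (f p) (f a)}"
  then obtain q where q: "q \<in> T" "f q \<in> P" "f x = h' (f q) (f p) (f a)"
    using P unfolding shifted_def by blast
  define q' where "q' = h x a p"
  have q'_T: "q' \<in> T"
    unfolding q'_def using x p a heap_closed[OF T] by blast
  have "f q' = f (h (h q p a) a p)"
    unfolding q'_def using x q p a heap_closed[OF T] pretruss_hom_heap_op[OF hom] by simp
  also have "\<dots> = f q"
    using q p a heap_closed[OF T] by (simp add: heap_assoc[OF T] heap_cancel_left[OF T]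
        heap_cancel_right[OF T])
  finally have "q' \<in> {x \<in> T. f x \<in> P}"
    using q'_T q by simp
  moreover have "x = h q' p a"
    unfolding q'_def using x p a heap_closed[OF T]
    by (simp add: heap_assoc[OF T] heap_cancel_left[OF T] heap_cancel_right[OF T])
  ultimately show "x \<in> shifted h {x \<in> T. f x \<in> P} p a"
    unfolding shifted_def by blast
qed

lemma ideal_shifted_image_preimage:
  assumes hom: "pretruss_hom T h m T' h' m' f" and T: "pretruss T h m"
    and P: "P \<subseteq> f ` T" and p: "p \<in> T" and a: "a \<in> T"
    and "ideal (f ` T) h' m' (shifted h' P (f p) (f a))"
  shows "ideal T h m (shifted h {x \<in> T. f x \<in> P} p a)"
  using assms ideal_image_preimage[OF hom T] shifted_image_preimage[OF hom pretruss_heap[OF T]]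
  by simp

lemma prime_alternative_image_preimage:
  assumes hom: "pretruss_hom T h m T' h' m' f" and T: "pretruss T h m"
    and P: "P \<subseteq> f ` T" and p: "p \<in> T" and abc: "a \<in> T" "b \<in> T" "c \<in> T"
    and "ideal (f ` T) h' m' (shifted h' P (f p) (f a)) \<or> h' (f b) (f c) (f p) \<in> P"
  shows "ideal T h m (shifted h {x \<in> T. f x \<in> P} p a) \<or> h b c p \<in> {x \<in> T. f x \<in> P}"
  using assms ideal_shifted_image_preimage[OF hom T P p abc(1)]
    heap_closed[OF pretruss_heap[OF T]] pretruss_hom_heap_op[OF hom] by auto

theorem lemma4p13:
  fixes T :: "'a set" and h :: "'a \<Rightarrow> 'a \<Rightarrow> 'a \<Rightarrow> 'a" and m :: "'a \<Rightarrow> 'a \<Rightarrow> 'a"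
    and T' :: "'b set" and h' :: "'b \<Rightarrow> 'b \<Rightarrow> 'b \<Rightarrow> 'b" and m' :: "'b \<Rightarrow> 'b \<Rightarrow> 'b"
    and f :: "'a \<Rightarrow> 'b" and P :: "'b set"
  assumes "pretruss T h m" and "pretruss T' h' m'"
    and "pretruss_hom T h m T' h' m' f"
    and "completely_prime (f ` T) h' m' P"
  shows "completely_prime T h m {x \<in> T. f x \<in> P}"
proof -
  note T = assms(1) and hom = assms(3) and prime = assms(4)[unfolded completely_prime_def]
  let ?Q = "{x \<in> T. f x \<in> P}"
  have P: "P \<subseteq> f ` T" "P \<noteq> {}"
    using prime unfolding paragon_def normal_subheap_def subheap_def by blast+
  note closed = heap_closed[OF pretruss_heap[OF T]] pretruss_mult_closed[OF T]
  note transport = pretruss_hom_heap_op[OF hom] pretruss_hom_mult[OF hom]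
  have "(h (m a b) (m a c) p \<in> ?Q \<longrightarrow> ideal T h m (shifted h ?Q p a) \<or> h b c p \<in> ?Q) \<and>
        (h (m b a) (m c a) p \<in> ?Q \<longrightarrow> ideal T h m (shifted h ?Q p a) \<or> h b c p \<in> ?Q)"
    if p: "p \<in> ?Q" and abc: "a \<in> T" "b \<in> T" "c \<in> T" for p a b c
  proof -
    have "h' (m' (f a) (f b)) (m' (f a) (f c)) (f p) \<in> P \<or>
        h' (m' (f b) (f a)) (m' (f c) (f a)) (f p) \<in> P \<Longrightarrow>
        ideal (f ` T) h' m' (shifted h' P (f p) (f a)) \<or> h' (f b) (f c) (f p) \<in> P"
      using prime p abc by blast
    then show ?thesis
      using prime_alternative_image_preimage[OF hom T P(1)] p abc closed transport by auto
  qed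
  moreover have "?Q \<noteq> {}"
    using P by blast
  moreover have "paragon T h m ?Q"
    using prime paragon_image_preimage[OF hom T] by blast
  ultimately show ?thesis
    unfolding completely_prime_def by blast
qed

end
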